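(* Fix integers $d\geq 1$ and $k\geq 1$. For any edge $e$ of $\mathbb{Z}^d$ there exists a unique $z\in(2k\mathbb{Z})^d$, denoted $g(e)$, such that $e$ is an edge of $Q_k^z$. Furthermore, any cycle $(e_1,\dots,e_n)$ in $\mathbb{Z}^d$ contains at least two edges $e_i,e_j$ (with $i\neq j$) such that $g(e_i)=g(e_j)$.
   Context: For $z\in(2k\mathbb{Z})^d$ let $B_k^z=([-k,k]^d\cap\mathbb{Z}^d)+z$, let $E(B_k^z)$ be the set of edges of $\mathbb{Z}^d$ with both endpoints in $B_k^z$, and let $Q_k^z$ be the subgraph of $B_k^z$ with edge set $\{(x,y)\in E(B_k^z):\ \text{there is no }\ell\in\{1,\dots,d\}\text{ with }x_\ell=y_\ell=z_\ell-k\}$. *)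

theory Defs
  imports Main
begin

text \<open>Points of Z^d are functions 'd => int for a finite index type 'd (d = CARD('d) >= 1).
Edges of Z^d are unordered pairs {x,y} of nearest neighbours.\<close>

definition adj :: "('d::finite \<Rightarrow> int) \<Rightarrow> ('d \<Rightarrow> int) \<Rightarrow> bool" where
  "adj x y \<longleftrightarrow> (\<Sum>i\<in>UNIV. \<bar>x i - y i\<bar>) = 1"

definition lattice_edges :: "('d::finite \<Rightarrow> int) set set" where
  "lattice_edges = {{x, y} | x y. adj x y}"

definition lat2k :: "int \<Rightarrow> ('d::finite \<Rightarrow> int) set" where
  "lat2k k = {z. \<forall>i. (2 * k) dvd z i}"

definition box :: "int \<Rightarrow> ('d::finite \<Rightarrow> int) \<Rightarrow> ('d \<Rightarrow> int) set" where
  "box k z = {x. \<forall>i. z i - k \<le> x i \<and> x i \<le> z i + k}"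

definition Q_edges :: "int \<Rightarrow> ('d::finite \<Rightarrow> int) \<Rightarrow> ('d \<Rightarrow> int) set set" where
  "Q_edges k z = {{x, y} | x y. adj x y \<and> x \<in> box k z \<and> y \<in> box k z
                     \<and> \<not> (\<exists>l. x l = z l - k \<and> y l = z l - k)}"

definition g :: "int \<Rightarrow> ('d::finite \<Rightarrow> int) set \<Rightarrow> ('d \<Rightarrow> int)" where
  "g k e = (THE z. z \<in> lat2k k \<and> e \<in> Q_edges k z)"

definition is_cycle :: "('d::finite \<Rightarrow> int) list \<Rightarrow> bool" where
  "is_cycle vs \<longleftrightarrow> length vs \<ge> 3 \<and> distinct vs \<and>
     (\<forall>i < length vs. adj (vs ! i) (vs ! ((i + 1) mod length vs)))"

definition cyc_edge :: "('d::finite \<Rightarrow> int) list \<Rightarrow> nat \<Rightarrow> ('d \<Rightarrow> int) set" where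
  "cyc_edge vs i = {vs ! i, vs ! ((i + 1) mod length vs)}"

end

theory Submission
  imports Defs
begin

text \<open>An edge \<open>{x, y}\<close> of \<open>Z^d\<close> lies in \<open>Q_k^z\<close> exactly when in every coordinate \<open>l\<close> the
larger endpoint coordinate \<open>max x_l y_l\<close> lies in the half-open interval \<open>(z_l - k, z_l + k]\<close>.
For \<open>z_l\<close> ranging over \<open>2kZ\<close> these intervals partition \<open>Z\<close>, so \<open>g(e)\<close> exists, is unique and
depends only on the coordinatewise maximum of \<open>e\<close>.  Along a cycle, take a vertex of maximal
coordinate sum: since a lattice step changes one coordinate by one, both of its neighbours are
coordinatewise below it, so the two cycle edges at that vertex have the same maximum and
hence the same \<open>g\<close>.\<close>

definition center :: "int \<Rightarrow> int \<Rightarrow> int" where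
  "center k m = 2 * k * ((m + k - 1) div (2 * k))"

lemma center_bounds:
  assumes "0 < k"
  shows "(2 * k) dvd center k m" "center k m - k < m" "m \<le> center k m + k"
proof -
  have "m + k - 1 = center k m + (m + k - 1) mod (2 * k)"
    unfolding center_def by simp
  moreover have "0 \<le> (m + k - 1) mod (2 * k)" "(m + k - 1) mod (2 * k) < 2 * k"
    using assms by simp_all
  ultimately show "center k m - k < m" "m \<le> center k m + k"
    by linarith+
  show "(2 * k) dvd center k m"
    unfolding center_def by simp
qed

lemma center_unique:
  assumes "0 < k" "(2 * k) dvd c" "c - k < m" "m \<le> c + k"
  shows "c = center k m"
proof -
  obtain t where c: "c = 2 * k * t"
    using assms(2) by blast
  have "(m + k - 1) div (2 * k) = t"
    by (rule int_div_pos_eq[where r = "m + k - 1 - c"]) (use assms c in simp_all)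
  then show ?thesis
    unfolding center_def c by simp
qed

lemma adj_sym: "adj x y \<Longrightarrow> adj y x"
  unfolding adj_def by (simp add: abs_minus_commute)

lemma adj_abs_diff_le_1:
  assumes "adj x y"
  shows "\<bar>x l - y l\<bar> \<le> 1"
proof -
  have "\<bar>x l - y l\<bar> \<le> (\<Sum>i\<in>UNIV. \<bar>x i - y i\<bar>)"
    by (rule member_le_sum) simp_all
  then show ?thesis
    using assms unfolding adj_def by simp
qed

lemma adj_sum_less:
  assumes "adj x y" "y l < x l"
  shows "(\<Sum>i\<in>UNIV. y i) < (\<Sum>i\<in>UNIV. x i)"
proof -
  have "(\<Sum>i\<in>UNIV. y i) - (\<Sum>i\<in>UNIV. x i) = (\<Sum>i\<in>UNIV. y i - x i)"
    by (simp add: sum_subtractf)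
  also have "\<dots> = (y l - x l) + (\<Sum>i\<in>UNIV - {l}. y i - x i)"
    by (simp add: sum.remove [of UNIV l])
  also have "\<dots> \<le> (y l - x l) + (\<Sum>i\<in>UNIV - {l}. \<bar>x i - y i\<bar>)"
    by (intro add_left_mono sum_mono) linarith
  also have "\<dots> = (y l - x l) + 1 - \<bar>x l - y l\<bar>"
    using assms(1) unfolding adj_def by (simp add: sum.remove [of UNIV l])
  finally show ?thesis
    using assms(2) by linarith
qed

lemma edge_in_Q_edges_iff:
  assumes "adj x y"
  shows "{x, y} \<in> Q_edges k z \<longleftrightarrow> (\<forall>l. z l - k < max (x l) (y l) \<and> max (x l) (y l) \<le> z l + k)"
    (is "_ \<longleftrightarrow> (\<forall>l. ?in_range x y l)")
proof -
  have box_iff: "u \<in> box k z \<and> v \<in> box k z \<and> \<not> (\<exists>l. u l = z l - k \<and> v l = z l - k)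
      \<longleftrightarrow> (\<forall>l. ?in_range u v l)" if "adj u v" for u v
  proof -
    have "?in_range u v l \<longleftrightarrow> z l - k \<le> u l \<and> u l \<le> z l + k \<and> z l - k \<le> v l \<and> v l \<le> z l + k
        \<and> \<not> (u l = z l - k \<and> v l = z l - k)" for l
      using adj_abs_diff_le_1 [OF that, of l] by (auto simp: max_def abs_le_iff)
    then show ?thesis
      unfolding box_def by blast
  qed
  have "{x, y} \<in> Q_edges k z \<longleftrightarrow> (\<exists>u v. {x, y} = {u, v} \<and> adj u v \<and> (\<forall>l. ?in_range u v l))"
    unfolding Q_edges_def mem_Collect_eq using box_iff by blast
  also have "\<dots> \<longleftrightarrow> (\<forall>l. ?in_range x y l)"
    using assms by (auto simp: doubleton_eq_iff max.commute)
  finally show ?thesis .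
qed

lemma edge_in_Q_edges_lat2k_iff:
  assumes "0 < k" "adj x y"
  shows "z \<in> lat2k k \<and> {x, y} \<in> Q_edges k z \<longleftrightarrow> z = (\<lambda>l. center k (max (x l) (y l)))"
  unfolding lat2k_def edge_in_Q_edges_iff [OF assms(2)]
  using center_bounds [OF assms(1)] center_unique [OF assms(1)] by fastforce

lemma g_edge:
  assumes "0 < k" "adj x y"
  shows "g k {x, y} = (\<lambda>l. center k (max (x l) (y l)))"
  unfolding g_def edge_in_Q_edges_lat2k_iff [OF assms] by simp

lemma g_edge_upper:
  assumes "0 < k" "adj x y" "\<And>l. y l \<le> x l"
  shows "g k {x, y} = (\<lambda>l. center k (x l))"
  using g_edge [OF assms(1,2)] assms(3) by (simp add: max_absorb1)

lemma cycle_peak: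
  assumes "is_cycle vs"
  defines "n \<equiv> length vs"
  obtains p i where "p < n" "i < n" "p \<noteq> i" "(p + 1) mod n = i"
    "adj (vs ! i) (vs ! p)" "adj (vs ! i) (vs ! ((i + 1) mod n))"
    "\<And>l. (vs ! p) l \<le> (vs ! i) l" "\<And>l. (vs ! ((i + 1) mod n)) l \<le> (vs ! i) l"
proof -
  have n: "3 \<le> n" and step: "\<And>j. j < n \<Longrightarrow> adj (vs ! j) (vs ! ((j + 1) mod n))"
    using assms unfolding is_cycle_def n_def by auto
  define s where "s v = (\<Sum>l\<in>UNIV. v l)" for v :: "'a \<Rightarrow> int"
  obtain i where "i \<in> {..<n}" and top: "Max ((\<lambda>j. s (vs ! j)) ` {..<n}) = s (vs ! i)"
    by (rule obtains_MAX [of "{..<n}" "\<lambda>j. s (vs ! j)"]) (use n in \<open>auto simp: lessThan_empty_iff\<close>)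
  then have i: "i < n" by simp
  have below: "(vs ! j) l \<le> (vs ! i) l" if "j < n" "adj (vs ! i) (vs ! j)" for j l
  proof (rule ccontr)
    assume "\<not> (vs ! j) l \<le> (vs ! i) l"
    then have "s (vs ! i) < s (vs ! j)"
      using adj_sum_less [OF adj_sym [OF that(2)], of l] unfolding s_def by simp
    moreover have "s (vs ! j) \<le> s (vs ! i)"
      using top [symmetric] that(1) by simp
    ultimately show False by simp
  qed
  define p where "p = (i + n - 1) mod n"
  have p: "p < n"
    using n unfolding p_def by simp
  have p_succ: "(p + 1) mod n = i"
  proof -
    have "Suc (i + n - 1) = i + n" using n by simp
    then show ?thesis using i unfolding p_def by (simp add: mod_Suc_eq)
  qed
  have "p \<noteq> i"
  proof
    assume "p = i"
    then have "(i + 1) mod n = i" using p_succ by simp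
    then show False using i n by (cases "i + 1 = n") simp_all
  qed
  have q: "(i + 1) mod n < n"
    using n by simp
  have adj_p: "adj (vs ! i) (vs ! p)"
    using step [OF p] unfolding p_succ by (rule adj_sym)
  have adj_q: "adj (vs ! i) (vs ! ((i + 1) mod n))"
    using step [OF i] .
  show thesis
    by (rule that [OF p i \<open>p \<noteq> i\<close> p_succ adj_p adj_q below [OF p adj_p] below [OF q adj_q]])
qed

lemma cycle_edges_same_g:
  assumes "0 < k" "is_cycle vs"
  obtains p i where "p < length vs" "i < length vs" "p \<noteq> i"
    "g k (cyc_edge vs p) = g k (cyc_edge vs i)"
proof -
  obtain p i where pi: "p < length vs" "i < length vs" "p \<noteq> i"
    and "(p + 1) mod length vs = i"
    and "adj (vs ! i) (vs ! p)" "adj (vs ! i) (vs ! ((i + 1) mod length vs))"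
    and "\<And>l. (vs ! p) l \<le> (vs ! i) l" "\<And>l. (vs ! ((i + 1) mod length vs)) l \<le> (vs ! i) l"
    using cycle_peak [OF assms(2)] by blast
  moreover from this have
    "cyc_edge vs p = {vs ! i, vs ! p}" "cyc_edge vs i = {vs ! i, vs ! ((i + 1) mod length vs)}"
    unfolding cyc_edge_def by auto
  ultimately have "g k (cyc_edge vs p) = g k (cyc_edge vs i)"
    by (simp add: g_edge_upper [OF assms(1)])
  with pi show thesis
    using that by blast
qed

theorem claim2p2:
  fixes k :: int
  assumes "k \<ge> 1"
  shows "(\<forall>e \<in> (lattice_edges :: ('d::finite \<Rightarrow> int) set set).
            \<exists>!z. z \<in> lat2k k \<and> e \<in> Q_edges k z)
       \<and> (\<forall>vs :: ('d \<Rightarrow> int) list. is_cycle vs \<longrightarrow>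
            (\<exists>i j. i < length vs \<and> j < length vs \<and> i \<noteq> j \<and>
                   g k (cyc_edge vs i) = g k (cyc_edge vs j)))"
proof -
  have k: "0 < k"
    using assms by simp
  have "\<exists>!z. z \<in> lat2k k \<and> e \<in> Q_edges k z" if "e \<in> lattice_edges" for e :: "('d \<Rightarrow> int) set"
  proof -
    from that obtain x y where "e = {x, y}" "adj x y"
      unfolding lattice_edges_def by blast
    then show ?thesis
      by (simp add: edge_in_Q_edges_lat2k_iff [OF k])
  qed
  moreover have "\<exists>i j. i < length vs \<and> j < length vs \<and> i \<noteq> j \<and>
      g k (cyc_edge vs i) = g k (cyc_edge vs j)" if "is_cycle vs" for vs :: "('d \<Rightarrow> int) list"
    using cycle_edges_same_g [OF k that] by metis
  ultimately show ?thesis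
    by blast
qed

end
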